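(* Let $k\ge 1$ and $B=\{p_1,p_1',\dots,p_k,p_k'\}$ be $2k$ distinct vertices. Let $C_B$ be the cycle multi-graph on $B$ with edges $(p_1,p_1'),(p_1',p_2),(p_2,p_2'),\dots,(p_k,p_k'),(p_k',p_1)$, and let $\tilde C_B$ be obtained from $C_B$ by adding a second parallel copy of each edge $(p_i,p_i')$, $i\in[k]$ (so every vertex of $\tilde C_B$ has degree $3$). Let $\tilde E_B$ be a set of $k$ edges with endpoints in $B$ such that every vertex of $B$ is an endpoint of exactly one edge of $\tilde E_B$, and let $H_{(B,\tilde E_B)}$ be the $4$-regular multi-graph obtained from $\tilde C_B$ by adding the edges $\tilde E_B$. Let $G_B$ be the simple graph with vertex set $B$ and edges $\{(p_i,p_i'):i\in[k]\}$. Then for any Eulerian tour $U$ on $H_{(B,\tilde E_B)}$, $\mathcal{A}(U)=G_B$ if and only if $\tilde E_B=\{(p_i,p_i'): i\in[k]\}$.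
   Context: A tour is a closed walk without repeated edges; an Eulerian tour on a connected multi-graph $F$ is a tour using every edge of $F$ exactly once. If $F$ is a connected $4$-regular multi-graph on $n$ vertices and $U=x_1e_1x_2\dots x_{2n}e_{2n}x_1$ is an Eulerian tour, its induced double-occurrence word is $m(U)=x_1x_2\cdots x_{2n}$. The alternance graph $\mathcal{A}(U)$ is the simple graph on $V(F)$ in which $u\neq v$ are adjacent iff $u$ and $v$ alternate in $m(U)$, i.e. $m(U)$ has the form $\dots u\dots v\dots u\dots v\dots$ or $\dots v\dots u\dots v\dots u\dots$. *)

theory Defs
  imports Main "HOL-Library.Multiset"
begin

text \<open>Multigraphs without loops are represented by a multiset of their edges,
each edge being a 2-element set of vertices (parallel edges = multiplicity).\<close>

text \<open>Edge multiset of H_(B,E~): vertices p_i = p i, p_i' = q i for i < k (0-based).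
Each (p_i,p_i') occurs twice, the cycle edges (p_i',p_(i+1 mod k)) once, plus the matching M.\<close>
definition H_edges :: "nat \<Rightarrow> (nat \<Rightarrow> 'a) \<Rightarrow> (nat \<Rightarrow> 'a) \<Rightarrow> 'a set set \<Rightarrow> 'a set multiset" where
  "H_edges k p q M =
     (\<Sum>i<k. {#{p i, q i}, {p i, q i}, {q i, p (Suc i mod k)}#}) + mset_set M"

definition perfect_matching_on :: "'a set \<Rightarrow> 'a set set \<Rightarrow> bool" where
  "perfect_matching_on B M \<longleftrightarrow>
     (\<forall>e\<in>M. \<exists>u v. e = {u, v} \<and> u \<noteq> v \<and> u \<in> B \<and> v \<in> B) \<and>
     (\<forall>v\<in>B. \<exists>!e. e \<in> M \<and> v \<in> e)"

text \<open>The list w = [x_1,...,x_m] is the induced word of an Eulerian tour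
x_1 e_1 x_2 ... x_m e_m x_1 of the multigraph with edge multiset E: the consecutive
(cyclic) pairs of vertices use every edge exactly once.\<close>
definition eulerian_tour_word :: "'a set multiset \<Rightarrow> 'a list \<Rightarrow> bool" where
  "eulerian_tour_word E w \<longleftrightarrow> w \<noteq> [] \<and>
     mset (map (\<lambda>j. {w ! j, w ! (Suc j mod length w)}) [0..<length w]) = E"

definition alternate :: "'a list \<Rightarrow> 'a \<Rightarrow> 'a \<Rightarrow> bool" where
  "alternate w u v \<longleftrightarrow> (\<exists>a b c d. a < b \<and> b < c \<and> c < d \<and> d < length w \<and>
     ((w!a = u \<and> w!b = v \<and> w!c = u \<and> w!d = v) \<or> (w!a = v \<and> w!b = u \<and> w!c = v \<and> w!d = u)))"

definition alternance_edges :: "'a list \<Rightarrow> 'a set set" where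
  "alternance_edges w = {{u, v} | u v. u \<noteq> v \<and> alternate w u v}"

end

theory Submission
  imports Defs
begin

text \<open>Since \<open>H\<close> is 4-regular, every vertex occurs exactly twice in the tour word. Fix a pair
  \<open>{p\<^sub>j, q\<^sub>j}\<close>; for \<open>k \<ge> 2\<close> the tour steps directly between \<open>p\<^sub>j\<close> and \<open>q\<^sub>j\<close> three times exactly when
  this pair belongs to \<open>M\<close>, and twice otherwise. The four occurrences of \<open>p\<^sub>j\<close> and \<open>q\<^sub>j\<close> cut the
  cyclic word into four arcs, and three direct steps mean that three arcs are empty. Then
  \<open>p\<^sub>j\<close> and \<open>q\<^sub>j\<close> interlace while every other vertex has both occurrences in the remaining arc,
  so \<open>{p\<^sub>j, q\<^sub>j}\<close> is an isolated edge of the alternance graph. Conversely, if it is an isolated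
  edge, every other vertex has both occurrences in one arc; vertices adjacent in \<open>H\<close> share their
  arc, and \<open>H\<close> minus the pair is connected, so all other vertices lie in a single arc and the
  tour steps directly between \<open>p\<^sub>j\<close> and \<open>q\<^sub>j\<close> three times. Finally a perfect matching contains
  all pairs \<open>{p\<^sub>i, q\<^sub>i}\<close> exactly when it equals the set of these pairs.\<close>

section \<open>Interlaced pairs of letters\<close>

lemma alternate_sym: "alternate w x y \<longleftrightarrow> alternate w y x"
  unfolding alternate_def by blast

lemma alternateI:
  assumes "\<alpha> < \<beta>" "\<beta> < \<gamma>" "\<gamma> < \<delta>" "\<delta> < length w"
    and "w ! \<alpha> = x" "w ! \<beta> = y" "w ! \<gamma> = x" "w ! \<delta> = y"
  shows "alternate w x y"
  unfolding alternate_def using assms by blast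

lemma alternate_imp_occurs: "alternate w x y \<Longrightarrow> \<exists>t<length w. w ! t = x"
  unfolding alternate_def by (metis less_trans)

lemma doubleton_mem_alternance_edges_iff:
  "{x, y} \<in> alternance_edges w \<longleftrightarrow> x \<noteq> y \<and> alternate w x y"
proof
  assume "{x, y} \<in> alternance_edges w"
  then obtain u v where "{x, y} = {u, v}" "u \<noteq> v" "alternate w u v"
    unfolding alternance_edges_def by blast
  then show "x \<noteq> y \<and> alternate w x y"
    by (auto simp: doubleton_eq_iff alternate_sym)
qed (auto simp: alternance_edges_def)

definition isolated_alternance_edge :: "'a list \<Rightarrow> 'a \<Rightarrow> 'a \<Rightarrow> bool" where
  "isolated_alternance_edge w u v \<longleftrightarrow>
     alternate w u v \<and> (\<forall>x. x \<notin> {u, v} \<longrightarrow> \<not> alternate w x u \<and> \<not> alternate w x v)"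

lemma isolated_alternance_edge_sym:
  "isolated_alternance_edge w u v \<longleftrightarrow> isolated_alternance_edge w v u"
  unfolding isolated_alternance_edge_def by (auto simp: alternate_sym)

definition occurrences :: "'a list \<Rightarrow> 'a \<Rightarrow> nat set" where
  "occurrences w x = {t. t < length w \<and> w ! t = x}"

lemma mem_occurrences_iff [simp]: "t \<in> occurrences w x \<longleftrightarrow> t < length w \<and> w ! t = x"
  by (simp add: occurrences_def)

lemma finite_occurrences [simp]: "finite (occurrences w x)"
  by (simp add: occurrences_def)

lemma alternate_iff_separated:
  assumes u: "occurrences w u = {a, c}" and "a < c"
  shows "alternate w x u \<longleftrightarrow>
    (\<exists>s\<in>occurrences w x. \<exists>s'\<in>occurrences w x. s \<in> {a<..<c} \<and> s' \<notin> {a<..<c})"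
proof
  assume "alternate w x u"
  then obtain \<alpha> \<beta> \<gamma> \<delta> where ord: "\<alpha> < \<beta>" "\<beta> < \<gamma>" "\<gamma> < \<delta>" "\<delta> < length w" and
    "(w!\<alpha> = x \<and> w!\<beta> = u \<and> w!\<gamma> = x \<and> w!\<delta> = u) \<or> (w!\<alpha> = u \<and> w!\<beta> = x \<and> w!\<gamma> = u \<and> w!\<delta> = x)"
    unfolding alternate_def by blast
  then consider "{\<alpha>, \<gamma>} \<subseteq> occurrences w x" "{\<beta>, \<delta>} \<subseteq> occurrences w u"
    | "{\<beta>, \<delta>} \<subseteq> occurrences w x" "{\<alpha>, \<gamma>} \<subseteq> occurrences w u"
    by auto
  then show "\<exists>s\<in>occurrences w x. \<exists>s'\<in>occurrences w x. s \<in> {a<..<c} \<and> s' \<notin> {a<..<c}"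
  proof cases
    case 1
    with u ord \<open>a < c\<close> have "\<beta> = a" "\<delta> = c" by auto
    with 1 ord show ?thesis by (intro bexI[of _ \<gamma>] bexI[of _ \<alpha>]) auto
  next
    case 2
    with u ord \<open>a < c\<close> have "\<alpha> = a" "\<gamma> = c" by auto
    with 2 ord show ?thesis by (intro bexI[of _ \<beta>] bexI[of _ \<delta>]) auto
  qed
next
  assume "\<exists>s\<in>occurrences w x. \<exists>s'\<in>occurrences w x. s \<in> {a<..<c} \<and> s' \<notin> {a<..<c}"
  then obtain s s' where s: "s \<in> occurrences w x" "s \<in> {a<..<c}"
    and s': "s' \<in> occurrences w x" "s' \<notin> {a<..<c}" by blast
  have "x \<noteq> u"
  proof
    assume "x = u"
    with s u show False by auto
  qed
  with s' have "s' \<notin> occurrences w u"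
    by auto
  then have "s' \<noteq> a" "s' \<noteq> c"
    using u by auto
  with s' consider "s' < a" | "c < s'"
    by fastforce
  moreover have "w ! a = u" "w ! c = u" "c < length w"
    using u by (metis insertI1 insert_commute mem_occurrences_iff)+
  ultimately show "alternate w x u"
  proof cases
    case 1
    then show ?thesis
      using s s' \<open>w ! a = u\<close> \<open>w ! c = u\<close> \<open>c < length w\<close>
      by (intro alternateI[of s' a s c]) auto
  next
    case 2
    then have "alternate w u x"
      using s s' \<open>w ! a = u\<close> \<open>w ! c = u\<close>
      by (intro alternateI[of a s c s']) auto
    then show ?thesis
      by (simp add: alternate_sym)
  qed
qed

definition interlaced :: "'a list \<Rightarrow> 'a \<Rightarrow> 'a \<Rightarrow> nat \<Rightarrow> nat \<Rightarrow> nat \<Rightarrow> nat \<Rightarrow> bool" where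
  "interlaced w u v a b c d \<longleftrightarrow> a < b \<and> b < c \<and> c < d \<and> d < length w \<and>
     occurrences w u = {a, c} \<and> occurrences w v = {b, d}"

lemma interlacedI:
  assumes "a < b" "b < c" "c < d" "d < length w"
    and "w ! a = u" "w ! b = v" "w ! c = u" "w ! d = v"
    and "card (occurrences w u) = 2" "card (occurrences w v) = 2"
  shows "interlaced w u v a b c d"
proof -
  have "{a, c} \<subseteq> occurrences w u" "{b, d} \<subseteq> occurrences w v"
    using assms by auto
  moreover have "card {a, c} = 2" "card {b, d} = 2"
    using assms by auto
  ultimately have "{a, c} = occurrences w u" "{b, d} = occurrences w v"
    using assms(9,10) by (metis card_subset_eq finite_occurrences)+
  with assms(1-4) show ?thesis
    unfolding interlaced_def by simp
qed

lemma interlacedD: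
  assumes "interlaced w u v a b c d"
  shows "a < b" "b < c" "c < d" "d < length w"
    and "occurrences w u = {a, c}" "occurrences w v = {b, d}"
    and "w ! a = u" "w ! b = v" "w ! c = u" "w ! d = v"
proof -
  show ord: "a < b" "b < c" "c < d" "d < length w"
    and occ: "occurrences w u = {a, c}" "occurrences w v = {b, d}"
    using assms unfolding interlaced_def by auto
  show "w ! a = u" "w ! b = v" "w ! c = u" "w ! d = v"
    using occ by (metis insertCI mem_occurrences_iff)+
qed

lemma interlaced_alternate: "interlaced w u v a b c d \<Longrightarrow> alternate w u v"
  unfolding interlaced_def by (rule alternateI[of a b c d]) auto

lemma interlaced_if_alternate:
  assumes "alternate w u v" "card (occurrences w u) = 2" "card (occurrences w v) = 2"
  obtains a b c d where "interlaced w u v a b c d" | a b c d where "interlaced w v u a b c d"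
  using assms unfolding alternate_def by (metis interlacedI)

text \<open>For \<open>t \<notin> {a, b, c, d}\<close>, \<open>arc a b c d t\<close> tells which of the four cyclic arcs cut out by
  \<open>a < b < c < d\<close> contains \<open>t\<close>; the arc from \<open>d\<close> back to \<open>a\<close> wraps around the end of the word.\<close>

definition arc :: "nat \<Rightarrow> nat \<Rightarrow> nat \<Rightarrow> nat \<Rightarrow> nat \<Rightarrow> bool \<times> bool" where
  "arc a b c d t = (t \<in> {a<..<c}, t \<in> {b<..<d})"

lemma not_alternate_iff_same_arc:
  assumes "interlaced w u v a b c d"
  shows "\<not> alternate w x u \<and> \<not> alternate w x v \<longleftrightarrow>
    (\<forall>s\<in>occurrences w x. \<forall>s'\<in>occurrences w x. arc a b c d s = arc a b c d s')"
proof -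
  have "occurrences w u = {a, c}" "a < c" "occurrences w v = {b, d}" "b < d"
    using assms unfolding interlaced_def by auto
  then have "\<not> alternate w x u \<longleftrightarrow>
      (\<forall>s\<in>occurrences w x. \<forall>s'\<in>occurrences w x. (s \<in> {a<..<c}) = (s' \<in> {a<..<c}))"
    and "\<not> alternate w x v \<longleftrightarrow>
      (\<forall>s\<in>occurrences w x. \<forall>s'\<in>occurrences w x. (s \<in> {b<..<d}) = (s' \<in> {b<..<d}))"
    by (simp_all only: alternate_iff_separated) blast+
  then show ?thesis
    unfolding arc_def by blast
qed

lemma same_arc_if_isolated:
  assumes il: "interlaced w u v a b c d" and iso: "isolated_alternance_edge w u v"
    and "x \<notin> {u, v}" "s \<in> occurrences w x" "s' \<in> occurrences w x"
  shows "arc a b c d s = arc a b c d s'"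
proof -
  have "\<forall>r\<in>occurrences w x. \<forall>r'\<in>occurrences w x. arc a b c d r = arc a b c d r'"
    using iso \<open>x \<notin> {u, v}\<close>
    unfolding isolated_alternance_edge_def not_alternate_iff_same_arc[OF il, symmetric] by blast
  with \<open>s \<in> occurrences w x\<close> \<open>s' \<in> occurrences w x\<close> show ?thesis
    by blast
qed

section \<open>Gaps between four positions of a cyclic word\<close>

lemma arc_Suc_mod:
  assumes "a < b" "b < c" "c < d" "d < n" "t < n"
    and "t \<notin> {a, b, c, d}" "Suc t mod n \<notin> {a, b, c, d}"
  shows "arc a b c d t = arc a b c d (Suc t mod n)"
proof (cases "Suc t < n")
  case True
  with assms show ?thesis by (auto simp: arc_def)
next
  case False
  with assms have "Suc t = n" by simp
  with assms show ?thesis by (auto simp: arc_def)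
qed

definition at_least_three :: "bool \<Rightarrow> bool \<Rightarrow> bool \<Rightarrow> bool \<Rightarrow> bool" where
  "at_least_three P0 P1 P2 P3 \<longleftrightarrow>
     (P0 \<and> P1 \<and> P2) \<or> (P1 \<and> P2 \<and> P3) \<or> (P2 \<and> P3 \<and> P0) \<or> (P3 \<and> P0 \<and> P1)"

lemma at_least_three_mono:
  "at_least_three P0 P1 P2 P3 \<Longrightarrow> (P0 \<Longrightarrow> Q0) \<Longrightarrow> (P1 \<Longrightarrow> Q1) \<Longrightarrow> (P2 \<Longrightarrow> Q2) \<Longrightarrow> (P3 \<Longrightarrow> Q3)
    \<Longrightarrow> at_least_three Q0 Q1 Q2 Q3"
  unfolding at_least_three_def by blast

text \<open>The gaps are the cyclic intervals strictly between consecutive positions among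
  \<open>a < b < c < d\<close>, the last one running from \<open>d\<close> around the end of the word to \<open>a\<close>.\<close>

definition three_gaps_empty :: "nat \<Rightarrow> nat \<Rightarrow> nat \<Rightarrow> nat \<Rightarrow> nat \<Rightarrow> bool" where
  "three_gaps_empty n a b c d \<longleftrightarrow>
     at_least_three (b = Suc a) (c = Suc b) (d = Suc c) (a = 0 \<and> Suc d = n)"

lemma three_gaps_empty_iff_arc_const:
  assumes "a < b" "b < c" "c < d" "d < n"
  shows "three_gaps_empty n a b c d \<longleftrightarrow>
    (\<forall>t<n. \<forall>t'<n. t \<notin> {a, b, c, d} \<longrightarrow> t' \<notin> {a, b, c, d} \<longrightarrow> arc a b c d t = arc a b c d t')"
    (is "_ \<longleftrightarrow> ?const")
proof
  assume "three_gaps_empty n a b c d"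
  then have "\<exists>v. \<forall>t<n. t \<notin> {a, b, c, d} \<longrightarrow> arc a b c d t = v"
    unfolding three_gaps_empty_def at_least_three_def
  proof (elim disjE conjE)
    assume "b = Suc a" "c = Suc b" "d = Suc c"
    then show ?thesis
      by (intro exI[of _ "(False, False)"]) (auto simp: arc_def)
  next
    assume "c = Suc b" "d = Suc c" "a = 0" "Suc d = n"
    then show ?thesis
      by (intro exI[of _ "(True, False)"]) (auto simp: arc_def)
  next
    assume "d = Suc c" "a = 0" "Suc d = n" "b = Suc a"
    then show ?thesis
      by (intro exI[of _ "(True, True)"]) (auto simp: arc_def)
  next
    assume "a = 0" "Suc d = n" "b = Suc a" "c = Suc b"
    then show ?thesis
      by (intro exI[of _ "(False, True)"]) (auto simp: arc_def)
  qed
  then show ?const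
    by metis
next
  assume const: ?const
  have gap1: "Suc a < n \<and> Suc a \<notin> {a, b, c, d} \<and> arc a b c d (Suc a) = (True, False)"
    if "b \<noteq> Suc a"
    using that assms by (auto simp: arc_def)
  have gap2: "Suc b < n \<and> Suc b \<notin> {a, b, c, d} \<and> arc a b c d (Suc b) = (True, True)"
    if "c \<noteq> Suc b"
    using that assms by (auto simp: arc_def)
  have gap3: "Suc c < n \<and> Suc c \<notin> {a, b, c, d} \<and> arc a b c d (Suc c) = (False, True)"
    if "d \<noteq> Suc c"
    using that assms by (auto simp: arc_def)
  have gap0: "\<exists>t<n. t \<notin> {a, b, c, d} \<and> arc a b c d t = (False, False)"
    if "\<not> (a = 0 \<and> Suc d = n)"
  proof (cases "a = 0")
    case True
    with that assms show ?thesis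
      by (intro exI[of _ "Suc d"]) (auto simp: arc_def)
  next
    case False
    with assms show ?thesis
      by (intro exI[of _ 0]) (auto simp: arc_def)
  qed
  show "three_gaps_empty n a b c d"
    unfolding three_gaps_empty_def at_least_three_def
    using gap0 gap1 gap2 gap3 const by (smt (verit) prod.inject)
qed

lemma card_ge_3_iff_at_least_three:
  assumes T: "T \<subseteq> {x0, x1, x2, x3}" and "distinct [x0, x1, x2, x3]"
  shows "3 \<le> card T \<longleftrightarrow> at_least_three (x0 \<in> T) (x1 \<in> T) (x2 \<in> T) (x3 \<in> T)"
proof
  have le2: "card T \<le> 2" if "T \<subseteq> {y, z}" for y z
  proof -
    have "card T \<le> card {y, z}"
      using that by (intro card_mono) auto
    also have "\<dots> \<le> 2"
      by (simp add: card_insert_if)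
    finally show ?thesis .
  qed
  assume "3 \<le> card T"
  then have "\<not> card T \<le> 2"
    by simp
  then show "at_least_three (x0 \<in> T) (x1 \<in> T) (x2 \<in> T) (x3 \<in> T)"
    using T le2[of x0 x1] le2[of x0 x2] le2[of x0 x3] le2[of x1 x2] le2[of x1 x3] le2[of x2 x3]
    unfolding at_least_three_def by blast
next
  have finT: "finite T"
    using T by (rule finite_subset) simp
  have ge3: "3 \<le> card T" if "{y, z, x} \<subseteq> T" "distinct [y, z, x]" for y z x
  proof -
    have "3 = card {y, z, x}"
      using that(2) by simp
    also have "\<dots> \<le> card T"
      using finT that(1) by (rule card_mono)
    finally show ?thesis .
  qed
  assume "at_least_three (x0 \<in> T) (x1 \<in> T) (x2 \<in> T) (x3 \<in> T)"
  then show "3 \<le> card T"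
    using ge3[of x0 x1 x2] ge3[of x1 x2 x3] ge3[of x2 x3 x0] ge3[of x3 x0 x1] assms(2)
    unfolding at_least_three_def by auto
qed

lemma successor_in_sorted_four:
  assumes "x0 < x1" "x1 < x2" "x2 < x3" "x3 < n" and "P = {x0, x1, x2, x3}"
  shows "Suc x0 mod n \<in> P \<Longrightarrow> x1 = Suc x0"
    and "Suc x1 mod n \<in> P \<Longrightarrow> x2 = Suc x1"
    and "Suc x2 mod n \<in> P \<Longrightarrow> x3 = Suc x2"
    and "Suc x3 mod n \<in> P \<Longrightarrow> x0 = 0 \<and> Suc x3 = n"
proof -
  show "Suc x0 mod n \<in> P \<Longrightarrow> x1 = Suc x0" "Suc x1 mod n \<in> P \<Longrightarrow> x2 = Suc x1"
    "Suc x2 mod n \<in> P \<Longrightarrow> x3 = Suc x2"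
    using assms by auto
  assume x3: "Suc x3 mod n \<in> P"
  then have "Suc x3 = n"
    using assms by (cases "Suc x3 < n") auto
  with x3 assms show "x0 = 0 \<and> Suc x3 = n"
    by auto
qed

lemma alternating_if_three_changes:
  assumes "{y0, y1, y2, y3} \<subseteq> {u, v}"
    and "at_least_three (y0 \<noteq> y1) (y1 \<noteq> y2) (y2 \<noteq> y3) (y3 \<noteq> y0)"
  shows "y0 = y2 \<and> y1 = y3 \<and> y0 \<noteq> y1"
  using assms unfolding at_least_three_def by auto

lemma sorted_four:
  fixes P :: "nat set"
  assumes "card P = 4"
  obtains x0 x1 x2 x3 where "P = {x0, x1, x2, x3}" "x0 < x1" "x1 < x2" "x2 < x3"
proof -
  have "finite P"
    using assms by (intro card_ge_0_finite) simp
  then have len: "length (sorted_list_of_set P) = 4"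
    and "sorted_wrt (<) (sorted_list_of_set P)" "set (sorted_list_of_set P) = P"
    using assms by simp_all
  have "\<exists>x0 x1 x2 x3. l = [x0, x1, x2, x3]" if "length l = 4" for l :: "nat list"
    using that by (auto simp: numeral_eq_Suc length_Suc_conv)
  with len obtain x0 x1 x2 x3 where "sorted_list_of_set P = [x0, x1, x2, x3]"
    by blast
  with that \<open>sorted_wrt (<) _\<close> \<open>set _ = P\<close> show ?thesis
    by auto
qed

section \<open>Direct transitions between two letters\<close>

definition transitions :: "'a list \<Rightarrow> 'a \<Rightarrow> 'a \<Rightarrow> nat set" where
  "transitions w u v = {t. t < length w \<and> {w ! t, w ! (Suc t mod length w)} = {u, v}}"

lemma transitions_commute: "transitions w u v = transitions w v u"
  unfolding transitions_def by (simp add: insert_commute)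

lemma transitions_subset: "transitions w u v \<subseteq> occurrences w u \<union> occurrences w v"
  unfolding transitions_def by auto

lemma card_transitions_ge_3:
  assumes il: "interlaced w u v a b c d" and gaps: "three_gaps_empty (length w) a b c d"
  shows "3 \<le> card (transitions w u v)"
proof -
  note ord = interlacedD(1-4)[OF il] and occ = interlacedD(5,6)[OF il]
    and letters = interlacedD(7-10)[OF il]
  have "transitions w u v \<subseteq> {a, b, c, d}"
    using transitions_subset[of w u v] occ by auto
  moreover have "at_least_three (a \<in> transitions w u v) (b \<in> transitions w u v)
      (c \<in> transitions w u v) (d \<in> transitions w u v)"
    using gaps unfolding three_gaps_empty_def
  proof (rule at_least_three_mono)
    show "a \<in> transitions w u v" if "b = Suc a"
      using that ord letters by (simp add: transitions_def)
    show "b \<in> transitions w u v" if "c = Suc b"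
      using that ord letters by (simp add: transitions_def insert_commute)
    show "c \<in> transitions w u v" if "d = Suc c"
      using that ord letters by (simp add: transitions_def)
    show "d \<in> transitions w u v" if "a = 0 \<and> Suc d = length w"
      using that ord letters by (simp add: transitions_def insert_commute)
  qed
  ultimately show ?thesis
    using ord by (subst card_ge_3_iff_at_least_three) auto
qed

lemma transitions_sorted_four:
  assumes "u \<noteq> v" and P: "occurrences w u \<union> occurrences w v = {x0, x1, x2, x3}"
    and ord: "x0 < x1" "x1 < x2" "x2 < x3"
  shows "x0 \<in> transitions w u v \<Longrightarrow> x1 = Suc x0 \<and> w ! x0 \<noteq> w ! x1"
    and "x1 \<in> transitions w u v \<Longrightarrow> x2 = Suc x1 \<and> w ! x1 \<noteq> w ! x2"
    and "x2 \<in> transitions w u v \<Longrightarrow> x3 = Suc x2 \<and> w ! x2 \<noteq> w ! x3"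
    and "x3 \<in> transitions w u v \<Longrightarrow> (x0 = 0 \<and> Suc x3 = length w) \<and> w ! x3 \<noteq> w ! x0"
proof -
  have "x3 \<in> occurrences w u \<union> occurrences w v"
    using P by simp
  then have "x3 < length w"
    by auto
  then have "x1 < length w" "x2 < length w"
    using ord by simp_all
  have next_in_P: "Suc t mod length w \<in> {x0, x1, x2, x3}"
    and change: "w ! t \<noteq> w ! (Suc t mod length w)" if "t \<in> transitions w u v" for t
  proof -
    have "t < length w" "{w ! t, w ! (Suc t mod length w)} = {u, v}"
      using that unfolding transitions_def by auto
    moreover from \<open>t < length w\<close> have "Suc t mod length w < length w"
      by (intro mod_less_divisor) linarith
    ultimately show "Suc t mod length w \<in> {x0, x1, x2, x3}" "w ! t \<noteq> w ! (Suc t mod length w)"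
      using \<open>u \<noteq> v\<close> unfolding P[symmetric] by (auto simp: doubleton_eq_iff)
  qed
  note succ = successor_in_sorted_four[OF ord \<open>x3 < length w\<close> refl]
  show "x0 \<in> transitions w u v \<Longrightarrow> x1 = Suc x0 \<and> w ! x0 \<noteq> w ! x1"
    using succ(1)[OF next_in_P] change[of x0] \<open>x1 < length w\<close> by auto
  show "x1 \<in> transitions w u v \<Longrightarrow> x2 = Suc x1 \<and> w ! x1 \<noteq> w ! x2"
    using succ(2)[OF next_in_P] change[of x1] \<open>x2 < length w\<close> by auto
  show "x2 \<in> transitions w u v \<Longrightarrow> x3 = Suc x2 \<and> w ! x2 \<noteq> w ! x3"
    using succ(3)[OF next_in_P] change[of x2] \<open>x3 < length w\<close> by auto
  show "x3 \<in> transitions w u v \<Longrightarrow> (x0 = 0 \<and> Suc x3 = length w) \<and> w ! x3 \<noteq> w ! x0"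
    using succ(4)[OF next_in_P] change[of x3] by auto
qed

lemma interlaced_if_many_transitions:
  assumes "u \<noteq> v" and occ: "card (occurrences w u) = 2" "card (occurrences w v) = 2"
    and many: "3 \<le> card (transitions w u v)"
  obtains u' v' a b c d where "{u', v'} = {u, v}" "interlaced w u' v' a b c d"
    "three_gaps_empty (length w) a b c d"
proof -
  let ?T = "transitions w u v"
  have "card (occurrences w u \<union> occurrences w v) = 4"
    using assms by (subst card_Un_disjoint) auto
  then obtain x0 x1 x2 x3 where P: "occurrences w u \<union> occurrences w v = {x0, x1, x2, x3}"
    and ord: "x0 < x1" "x1 < x2" "x2 < x3"
    by (rule sorted_four)
  note links = transitions_sorted_four[OF \<open>u \<noteq> v\<close> P ord]
  have "x3 < length w"
    using P[symmetric] by auto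
  have "distinct [x0, x1, x2, x3]"
    using ord by auto
  with many P transitions_subset[of w u v]
  have in_T: "at_least_three (x0 \<in> ?T) (x1 \<in> ?T) (x2 \<in> ?T) (x3 \<in> ?T)"
    by (simp add: card_ge_3_iff_at_least_three)
  then have gaps: "three_gaps_empty (length w) x0 x1 x2 x3"
    unfolding three_gaps_empty_def by (rule at_least_three_mono) (use links in blast)+
  have "{w ! x0, w ! x1, w ! x2, w ! x3} \<subseteq> {u, v}"
    using P[symmetric] by auto
  moreover have "at_least_three (w ! x0 \<noteq> w ! x1) (w ! x1 \<noteq> w ! x2) (w ! x2 \<noteq> w ! x3)
      (w ! x3 \<noteq> w ! x0)"
    by (intro at_least_three_mono[OF in_T]) (meson links)+
  ultimately have alt: "w ! x0 = w ! x2 \<and> w ! x1 = w ! x3 \<and> w ! x0 \<noteq> w ! x1"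
    by (rule alternating_if_three_changes)
  with \<open>{w ! x0, w ! x1, w ! x2, w ! x3} \<subseteq> {u, v}\<close> have uv: "{w ! x0, w ! x1} = {u, v}"
    by auto
  then have "card (occurrences w (w ! x0)) = 2" "card (occurrences w (w ! x1)) = 2"
    using occ by (auto simp: doubleton_eq_iff)
  with ord \<open>x3 < length w\<close> alt have "interlaced w (w ! x0) (w ! x1) x0 x1 x2 x3"
    by (intro interlacedI) auto
  with uv gaps show thesis
    using that by blast
qed

lemma isolated_if_many_transitions:
  assumes "u \<noteq> v" "card (occurrences w u) = 2" "card (occurrences w v) = 2"
    and "3 \<le> card (transitions w u v)"
  shows "isolated_alternance_edge w u v"
proof -
  obtain u' v' a b c d where uv: "{u', v'} = {u, v}" and il: "interlaced w u' v' a b c d"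
    and gaps: "three_gaps_empty (length w) a b c d"
    using assms by (rule interlaced_if_many_transitions)
  note ord = interlacedD(1-4)[OF il] and letters = interlacedD(7-10)[OF il]
  have const: "arc a b c d s = arc a b c d s'"
    if "s < length w" "s' < length w" "s \<notin> {a, b, c, d}" "s' \<notin> {a, b, c, d}" for s s'
    using gaps three_gaps_empty_iff_arc_const[OF ord] that by blast
  have "\<not> alternate w x u' \<and> \<not> alternate w x v'" if "x \<notin> {u', v'}" for x
    unfolding not_alternate_iff_same_arc[OF il]
    using that letters by (auto intro!: const)
  then have "isolated_alternance_edge w u' v'"
    unfolding isolated_alternance_edge_def using interlaced_alternate[OF il] by blast
  with uv show ?thesis
    by (metis doubleton_eq_iff isolated_alternance_edge_sym)
qed

lemma same_arc_across_adjacent_letters: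
  assumes il: "interlaced w u v a b c d" and iso: "isolated_alternance_edge w u v"
    and t: "t < length w" "w ! t \<notin> {u, v}" "w ! (Suc t mod length w) \<notin> {u, v}"
    and s: "s \<in> occurrences w (w ! t)" "s' \<in> occurrences w (w ! (Suc t mod length w))"
  shows "arc a b c d s = arc a b c d s'"
proof -
  note ord = interlacedD(1-4)[OF il] and letters = interlacedD(7-10)[OF il]
  have "Suc t mod length w < length w"
    using t(1) by (intro mod_less_divisor) linarith
  then have "arc a b c d t = arc a b c d (Suc t mod length w)"
    using ord t letters by (intro arc_Suc_mod) auto
  moreover have "t \<in> occurrences w (w ! t)"
    "Suc t mod length w \<in> occurrences w (w ! (Suc t mod length w))"
    using t(1) \<open>Suc t mod length w < length w\<close> by simp_all
  ultimately show ?thesis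
    using same_arc_if_isolated[OF il iso t(2)] same_arc_if_isolated[OF il iso t(3)] s by metis
qed

definition closed_walk_edges :: "'a list \<Rightarrow> 'a set multiset" where
  "closed_walk_edges w = mset (map (\<lambda>t. {w ! t, w ! (Suc t mod length w)}) [0..<length w])"

lemma size_filter_mset_map_upt:
  "size (filter_mset P (mset (map f [0..<n]))) = card {t. t < n \<and> P (f t)}"
proof -
  have "size (filter_mset P (mset (map f [0..<n]))) = length (filter (\<lambda>t. P (f t)) [0..<n])"
    unfolding mset_filter[symmetric] size_mset filter_map length_map o_def ..
  also have "\<dots> = card ({t. P (f t)} \<inter> set [0..<n])"
    by (rule distinct_length_filter) simp
  also have "{t. P (f t)} \<inter> set [0..<n] = {t. t < n \<and> P (f t)}"
    by auto
  finally show ?thesis .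
qed

lemma filter_mset_sum: "filter_mset P (\<Sum>i\<in>A. f i) = (\<Sum>i\<in>A. filter_mset P (f i))"
  by (induction A rule: infinite_finite_induct) auto

lemma count_closed_walk_edges: "count (closed_walk_edges w) {u, v} = card (transitions w u v)"
proof -
  have "count (closed_walk_edges w) {u, v} =
      size (filter_mset (\<lambda>e. e = {u, v}) (closed_walk_edges w))"
    by (simp only: filter_eq_replicate_mset size_replicate_mset)
  then show ?thesis
    unfolding closed_walk_edges_def transitions_def by (simp only: size_filter_mset_map_upt)
qed

lemma bij_betw_Suc_mod: "0 < n \<Longrightarrow> bij_betw (\<lambda>i. Suc i mod n) {..<n} {..<n}"
  by (intro bij_betw_imageI endo_inj_surj) (auto simp: inj_on_def mod_Suc split: if_splits)

lemma card_rotate: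
  fixes P :: "nat \<Rightarrow> bool"
  shows "card {t. t < n \<and> P (Suc t mod n)} = card {t. t < n \<and> P t}"
proof (cases "n = 0")
  case False
  then have bij: "bij_betw (\<lambda>t. Suc t mod n) {..<n} {..<n}"
    by (simp add: bij_betw_Suc_mod)
  have "bij_betw (\<lambda>t. Suc t mod n) {t. t < n \<and> P (Suc t mod n)} {t. t < n \<and> P t}"
    using bij_betw_subset[OF bij, of "{t. t < n \<and> P (Suc t mod n)}"] bij_betw_imp_surj_on[OF bij]
    by (auto simp: bij_betw_def)
  then show ?thesis
    by (rule bij_betw_same_card)
qed simp

lemma size_filter_closed_walk_edges:
  assumes no_loops: "\<And>t. t < length w \<Longrightarrow> w ! t \<noteq> w ! (Suc t mod length w)"
  shows "size (filter_mset (\<lambda>e. v \<in> e) (closed_walk_edges w)) = 2 * card (occurrences w v)"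
proof -
  let ?next = "\<lambda>t. Suc t mod length w"
  have "size (filter_mset (\<lambda>e. v \<in> e) (closed_walk_edges w)) =
      card {t. t < length w \<and> v \<in> {w ! t, w ! ?next t}}"
    unfolding closed_walk_edges_def by (rule size_filter_mset_map_upt)
  also have "{t. t < length w \<and> v \<in> {w ! t, w ! ?next t}} =
      occurrences w v \<union> {t. t < length w \<and> w ! ?next t = v}"
    by auto
  also have "card \<dots> = card (occurrences w v) + card {t. t < length w \<and> w ! ?next t = v}"
    using no_loops by (intro card_Un_disjoint) auto
  also have "card {t. t < length w \<and> w ! ?next t = v} = card (occurrences w v)"
    unfolding occurrences_def by (rule card_rotate)
  finally show ?thesis
    by simp
qed

lemma add_mod_neq_self:
  fixes j k x :: nat
  assumes "j < k" "0 < x" "x < k"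
  shows "(j + x) mod k \<noteq> j"
proof (cases "j + x < k")
  case False
  then have "(j + x) mod k = j + x - k"
    using assms by (simp add: le_mod_geq)
  with assms False show ?thesis
    by linarith
qed (use assms in simp)

lemma cycle_minus_vertex_const:
  fixes g :: "nat \<Rightarrow> 'b"
  assumes "j < k"
    and step: "\<And>i. i < k \<Longrightarrow> i \<noteq> j \<Longrightarrow> Suc i mod k \<noteq> j \<Longrightarrow> g i = g (Suc i mod k)"
    and "i < k" "i \<noteq> j"
  shows "g i = g (Suc j mod k)"
proof -
  have walk: "g ((Suc j + m) mod k) = g (Suc j mod k)" if "Suc m < k" for m
    using that
  proof (induction m)
    case (Suc m)
    let ?i = "(Suc j + m) mod k"
    have "?i \<noteq> j" "Suc ?i mod k \<noteq> j"
      using add_mod_neq_self[of j k "Suc m"] add_mod_neq_self[of j k "Suc (Suc m)"]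
        \<open>j < k\<close> Suc.prems
      by (simp_all add: mod_Suc_eq)
    then have "g ?i = g ((Suc j + Suc m) mod k)"
      using step[of ?i] \<open>j < k\<close> by (simp add: mod_Suc_eq)
    with Suc show ?case
      by simp
  qed simp
  show ?thesis
  proof (cases "j < i")
    case True
    then show ?thesis
      using walk[of "i - Suc j"] \<open>i < k\<close> by simp
  next
    case False
    with \<open>i \<noteq> j\<close> have "i < j" by simp
    then have "(Suc j + (i + k - Suc j)) mod k = i"
      using \<open>j < k\<close> \<open>i < k\<close> by simp
    then show ?thesis
      using walk[of "i + k - Suc j"] \<open>i < j\<close> \<open>j < k\<close> by simp
  qed
qed

lemma perfect_matching_unique:
  assumes "perfect_matching_on B M" "x \<in> B" "e \<in> M" "x \<in> e" "e' \<in> M" "x \<in> e'"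
  shows "e = e'"
proof -
  from assms(1) have "\<forall>v\<in>B. \<exists>!e. e \<in> M \<and> v \<in> e"
    unfolding perfect_matching_on_def by (rule conjunct2)
  with assms(2) have "\<exists>!e. e \<in> M \<and> x \<in> e"
    by blast
  with assms(3-6) show ?thesis
    by (metis (no_types, lifting))
qed

lemma perfect_matching_eqI:
  assumes M: "perfect_matching_on B M" and N: "perfect_matching_on B N" and "N \<subseteq> M"
  shows "M = N"
proof
  show "M \<subseteq> N"
  proof
    fix e assume "e \<in> M"
    with M obtain x y where "e = {x, y}" "x \<in> B"
      unfolding perfect_matching_on_def by meson
    with N obtain e' where "e' \<in> N" "x \<in> e'"
      unfolding perfect_matching_on_def by meson
    with \<open>N \<subseteq> M\<close> have "e = e'"
      using perfect_matching_unique[OF M \<open>x \<in> B\<close> \<open>e \<in> M\<close>] \<open>e = {x, y}\<close> by blast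
    with \<open>e' \<in> N\<close> show "e \<in> N"
      by simp
  qed
qed fact

section \<open>Eulerian tours of \<open>H\<close>\<close>

locale H_tour =
  fixes k :: nat and p q :: "nat \<Rightarrow> 'a" and M :: "'a set set" and w :: "'a list"
  assumes k_pos: "k \<ge> 1"
    and inj_p: "inj_on p {..<k}" and inj_q: "inj_on q {..<k}"
    and p_q_disjoint: "p ` {..<k} \<inter> q ` {..<k} = {}"
    and matching: "perfect_matching_on (p ` {..<k} \<union> q ` {..<k}) M"
    and tour: "eulerian_tour_word (H_edges k p q M) w"
begin

text \<open>A block is a pair \<open>{p i, q i}\<close>, an edge of \<open>G\<^sub>B\<close> that is doubled in \<open>H\<close>; a link is a cycle
  edge \<open>{q i, p (Suc i mod k)}\<close>.\<close>

abbreviation B :: "'a set" where "B \<equiv> p ` {..<k} \<union> q ` {..<k}"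
abbreviation H :: "'a set multiset" where "H \<equiv> H_edges k p q M"
abbreviation blocks :: "'a set set" where "blocks \<equiv> {{p i, q i} | i. i < k}"

lemma p_eq_iff: "i < k \<Longrightarrow> j < k \<Longrightarrow> p i = p j \<longleftrightarrow> i = j"
  using inj_p by (auto dest: inj_onD)

lemma q_eq_iff: "i < k \<Longrightarrow> j < k \<Longrightarrow> q i = q j \<longleftrightarrow> i = j"
  using inj_q by (auto dest: inj_onD)

lemma p_neq_q: "i < k \<Longrightarrow> j < k \<Longrightarrow> p i \<noteq> q j"
  and q_neq_p: "i < k \<Longrightarrow> j < k \<Longrightarrow> q i \<noteq> p j"
  using p_q_disjoint by auto

lemma Suc_mod_less: "Suc i mod k < k"
  using k_pos by simp

lemma block_eq_iff: "i < k \<Longrightarrow> j < k \<Longrightarrow> {p i, q i} = {p j, q j} \<longleftrightarrow> i = j"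
  using p_eq_iff p_neq_q by (metis doubleton_eq_iff)

lemma link_eq_block_iff:
  "i < k \<Longrightarrow> j < k \<Longrightarrow> {q i, p (Suc i mod k)} = {p j, q j} \<longleftrightarrow> i = j \<and> k = 1"
proof -
  assume ij: "i < k" "j < k"
  have "Suc j mod k = j \<longleftrightarrow> k = 1"
  proof (cases "Suc j < k")
    case False
    with \<open>j < k\<close> have "Suc j = k"
      by simp
    then show ?thesis
      by auto
  qed simp
  then show ?thesis
    using ij p_eq_iff[OF Suc_mod_less] q_eq_iff p_neq_q[OF ij(2) ij(1)]
    by (auto simp: doubleton_eq_iff)
qed

lemma edge_of_M: "e \<in> M \<Longrightarrow> \<exists>x y. e = {x, y} \<and> x \<noteq> y \<and> x \<in> B \<and> y \<in> B"
  using matching unfolding perfect_matching_on_def by meson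

lemma finite_M: "finite M"
proof (rule finite_subset)
  show "M \<subseteq> Pow B"
    using edge_of_M by fastforce
qed simp

text \<open>For \<open>k = 1\<close> the only link is a third copy of the block.\<close>

lemma count_H_block:
  assumes "j < k"
  shows "count H {p j, q j} = 2 + of_bool (k = 1) + of_bool ({p j, q j} \<in> M)"
proof -
  have "count {#{p i, q i}, {p i, q i}, {q i, p (Suc i mod k)}#} {p j, q j} =
      2 * of_bool ({p i, q i} = {p j, q j}) + of_bool ({q i, p (Suc i mod k)} = {p j, q j})" for i
    by simp
  also have "\<dots> i = (if i = j then 2 + of_bool (k = 1) else 0)" if "i < k" for i
    by (simp add: block_eq_iff[OF that assms] link_eq_block_iff[OF that assms])
  finally have "(\<Sum>i<k. count {#{p i, q i}, {p i, q i}, {q i, p (Suc i mod k)}#} {p j, q j}) =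
      2 + of_bool (k = 1)"
    using assms by simp
  then show ?thesis
    unfolding H_edges_def count_union count_sum using finite_M by simp
qed

lemma closed_walk_edges_eq_H: "closed_walk_edges w = H"
  using tour unfolding eulerian_tour_word_def closed_walk_edges_def by simp

lemma edge_of_H: "e \<in># H \<Longrightarrow> \<exists>x y. e = {x, y} \<and> x \<noteq> y \<and> x \<in> B \<and> y \<in> B"
proof -
  assume "e \<in># H"
  then consider "e \<in> M" | i where "i < k" "e = {p i, q i} \<or> e = {q i, p (Suc i mod k)}"
    unfolding H_edges_def using finite_M by (auto simp: set_mset_sum)
  then show ?thesis
  proof cases
    case 1
    then show ?thesis
      by (rule edge_of_M)
  next
    case 2
    from 2(2) show ?thesis
    proof (elim disjE)
      assume "e = {p i, q i}"
      with 2(1) show ?thesis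
        by (intro exI[of _ "p i"] exI[of _ "q i"]) (auto simp: p_neq_q)
    next
      assume "e = {q i, p (Suc i mod k)}"
      with 2(1) show ?thesis
        by (intro exI[of _ "q i"] exI[of _ "p (Suc i mod k)"]) (auto simp: q_neq_p Suc_mod_less)
    qed
  qed
qed

lemma letters_in_B: "t < length w \<Longrightarrow> w ! t \<in> B"
  and no_loops: "t < length w \<Longrightarrow> w ! t \<noteq> w ! (Suc t mod length w)"
proof -
  assume "t < length w"
  then have "{w ! t, w ! (Suc t mod length w)} \<in># closed_walk_edges w"
    unfolding closed_walk_edges_def set_mset_mset set_map by (intro imageI) simp
  then have "{w ! t, w ! (Suc t mod length w)} \<in># H"
    by (simp only: closed_walk_edges_eq_H)
  then obtain x y where "{w ! t, w ! (Suc t mod length w)} = {x, y}" "x \<noteq> y" "x \<in> B" "y \<in> B"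
    by (elim edge_of_H[THEN exE] exE conjE)
  then show "w ! t \<in> B" "w ! t \<noteq> w ! (Suc t mod length w)"
    by (auto simp: doubleton_eq_iff)
qed

lemma card_blocks_containing: "v \<in> B \<Longrightarrow> card {i. i < k \<and> v \<in> {p i, q i}} = 1"
proof -
  assume "v \<in> B"
  then obtain j where "j < k" "v = p j \<or> v = q j"
    by blast
  then have "{i. i < k \<and> v \<in> {p i, q i}} = {j}"
    using p_eq_iff q_eq_iff p_neq_q q_neq_p by auto
  then show ?thesis
    by simp
qed

lemma card_links_containing: "v \<in> B \<Longrightarrow> card {i. i < k \<and> v \<in> {q i, p (Suc i mod k)}} = 1"
proof -
  assume "v \<in> B"
  then obtain j where j: "j < k" "v = p j \<or> v = q j"
    by blast
  then show ?thesis
  proof (elim disjE)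
    assume "v = p j"
    then have "{i. i < k \<and> v \<in> {q i, p (Suc i mod k)}} = {i. i < k \<and> Suc i mod k = j}"
      using j(1) by (auto simp: p_eq_iff Suc_mod_less p_neq_q q_neq_p)
    also have "card \<dots> = card {i. i < k \<and> i = j}"
      by (rule card_rotate)
    also have "{i. i < k \<and> i = j} = {j}"
      using j(1) by auto
    finally show ?thesis
      by simp
  next
    assume "v = q j"
    then have "{i. i < k \<and> v \<in> {q i, p (Suc i mod k)}} = {j}"
      using j(1) by (auto simp: q_eq_iff Suc_mod_less p_neq_q q_neq_p)
    then show ?thesis
      by simp
  qed
qed

lemma card_M_containing: "v \<in> B \<Longrightarrow> card {e \<in> M. v \<in> e} = 1"
proof -
  assume "v \<in> B"
  with matching obtain e where "e \<in> M" "v \<in> e"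
    unfolding perfect_matching_on_def by meson
  then have "{e \<in> M. v \<in> e} = {e}"
    using perfect_matching_unique[OF matching \<open>v \<in> B\<close>] by blast
  then show ?thesis
    by simp
qed

lemma degree_H: "v \<in> B \<Longrightarrow> size (filter_mset (\<lambda>e. v \<in> e) H) = 4"
proof -
  assume "v \<in> B"
  let ?block = "\<lambda>i. {p i, q i}" and ?link = "\<lambda>i. {q i, p (Suc i mod k)}"
  have triple: "size (filter_mset (\<lambda>e. v \<in> e) {#X, X, Y#}) = 2 * of_bool (v \<in> X) + of_bool (v \<in> Y)"
    for X Y :: "'a set"
    by simp
  have "size (filter_mset (\<lambda>e. v \<in> e) H) =
      (\<Sum>i<k. size (filter_mset (\<lambda>e. v \<in> e) {#?block i, ?block i, ?link i#})) +
      card {e \<in> M. v \<in> e}"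
    unfolding H_edges_def filter_union_mset size_union filter_mset_sum size_multiset_sum
      filter_mset_mset_set[OF finite_M] size_mset_set ..
  also have "(\<Sum>i<k. size (filter_mset (\<lambda>e. v \<in> e) {#?block i, ?block i, ?link i#})) =
      (\<Sum>i<k. 2 * of_bool (v \<in> ?block i) + of_bool (v \<in> ?link i))"
    by (simp only: triple)
  also have "\<dots> = 2 * card ({..<k} \<inter> {i. v \<in> ?block i}) + card ({..<k} \<inter> {i. v \<in> ?link i})"
    by (simp only: sum.distrib sum_distrib_left[symmetric] sum_of_bool_eq finite_lessThan of_nat_id)
  also have "{..<k} \<inter> {i. v \<in> ?block i} = {i. i < k \<and> v \<in> ?block i}"
    by auto
  also have "{..<k} \<inter> {i. v \<in> ?link i} = {i. i < k \<and> v \<in> ?link i}"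
    by auto
  finally show ?thesis
    using card_blocks_containing[OF \<open>v \<in> B\<close>] card_links_containing[OF \<open>v \<in> B\<close>]
      card_M_containing[OF \<open>v \<in> B\<close>] by simp
qed

lemma card_occurrences: "v \<in> B \<Longrightarrow> card (occurrences w v) = 2"
  using degree_H size_filter_closed_walk_edges[OF no_loops, of v] closed_walk_edges_eq_H by simp

lemma block_in_M_if_k_eq_1: "k = 1 \<Longrightarrow> {p 0, q 0} \<in> M"
proof -
  assume "k = 1"
  then have B: "B = {p 0, q 0}"
    by (simp add: lessThan_Suc insert_commute)
  then have "p 0 \<in> B"
    by simp
  with matching obtain e where "e \<in> M" "p 0 \<in> e"
    unfolding perfect_matching_on_def by meson
  moreover obtain x y where "e = {x, y}" "x \<noteq> y" "x \<in> B" "y \<in> B"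
    using edge_of_M[OF \<open>e \<in> M\<close>] by (elim exE conjE)
  ultimately show ?thesis
    using B by (auto simp: insert_commute)
qed

lemma block_in_M_iff:
  assumes "j < k"
  shows "{p j, q j} \<in> M \<longleftrightarrow> 3 \<le> card (transitions w (p j) (q j))"
proof -
  have "card (transitions w (p j) (q j)) = 2 + of_bool (k = 1) + of_bool ({p j, q j} \<in> M)"
    using count_H_block[OF assms] count_closed_walk_edges[of w "p j" "q j"] closed_walk_edges_eq_H
    by simp
  moreover have "{p j, q j} \<in> M" if "k = 1"
    using block_in_M_if_k_eq_1[OF that] assms that by simp
  ultimately show ?thesis
    by auto
qed

lemma block_in_H: "i < k \<Longrightarrow> {p i, q i} \<in># H"
  and link_in_H: "i < k \<Longrightarrow> {q i, p (Suc i mod k)} \<in># H"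
  unfolding H_edges_def by (auto simp: set_mset_sum)

lemma edge_of_H_in_word: "e \<in># H \<Longrightarrow> \<exists>t<length w. e = {w ! t, w ! (Suc t mod length w)}"
  unfolding closed_walk_edges_eq_H[symmetric] closed_walk_edges_def by auto

lemma block_unique: "i < k \<Longrightarrow> j < k \<Longrightarrow> x \<in> {p i, q i} \<Longrightarrow> x \<in> {p j, q j} \<Longrightarrow> i = j"
  using p_eq_iff q_eq_iff p_neq_q q_neq_p by blast

lemma same_arc_along_H_edge:
  assumes il: "interlaced w u v a b c d" and iso: "isolated_alternance_edge w u v"
    and xy: "{x, y} \<in># H" "x \<notin> {u, v}" "y \<notin> {u, v}"
    and s: "s \<in> occurrences w x" "s' \<in> occurrences w y"
  shows "arc a b c d s = arc a b c d s'"
proof -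
  obtain t where t: "t < length w" "{x, y} = {w ! t, w ! (Suc t mod length w)}"
    using edge_of_H_in_word[OF xy(1)] by blast
  then consider "x = w ! t" "y = w ! (Suc t mod length w)"
    | "y = w ! t" "x = w ! (Suc t mod length w)"
    by (auto simp: doubleton_eq_iff)
  then show ?thesis
  proof cases
    case 1
    then show ?thesis
      using same_arc_across_adjacent_letters[OF il iso t(1), of s s'] xy s by simp
  next
    case 2
    then show ?thesis
      using same_arc_across_adjacent_letters[OF il iso t(1), of s' s] xy s by simp
  qed
qed

text \<open>Removing the block \<open>{p j, q j}\<close> from \<open>H\<close> leaves a path through all other blocks and
  links, along which the arc containing the occurrences of a letter cannot change.\<close>

lemma arc_const_if_isolated:
  assumes "j < k" and uv: "{u, v} = {p j, q j}"
    and il: "interlaced w u v a b c d" and iso: "isolated_alternance_edge w u v"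
  shows "\<forall>t<length w. \<forall>t'<length w. t \<notin> {a, b, c, d} \<longrightarrow> t' \<notin> {a, b, c, d} \<longrightarrow>
    arc a b c d t = arc a b c d t'"
proof -
  define g where "g i = arc a b c d (SOME s. s \<in> occurrences w (p i))" for i
  have some_occ: "(SOME s. s \<in> occurrences w x) \<in> occurrences w x" if "x \<in> B" for x
  proof -
    have "occurrences w x \<noteq> {}"
      using card_occurrences[OF that] by auto
    then show ?thesis
      by (rule some_in_eq[THEN iffD2])
  qed
  have outside: "p i \<notin> {u, v}" "q i \<notin> {u, v}" if "i < k" "i \<noteq> j" for i
    using uv that block_unique[OF that(1) \<open>j < k\<close>] by auto
  have arc_p: "arc a b c d s = g i" if "i < k" "i \<noteq> j" "s \<in> occurrences w (p i)" for i s
    unfolding g_def using that outside some_occ by (intro same_arc_if_isolated[OF il iso]) auto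
  have arc_q: "arc a b c d s = g i" if "i < k" "i \<noteq> j" "s \<in> occurrences w (q i)" for i s
    using same_arc_along_H_edge[OF il iso block_in_H outside[OF that(1,2)] some_occ that(3)]
      arc_p[OF that(1,2) some_occ] that(1) by auto
  have "g i = g (Suc j mod k)" if "i < k" "i \<noteq> j" for i
  proof (rule cycle_minus_vertex_const[OF \<open>j < k\<close> _ that])
    fix i assume i: "i < k" "i \<noteq> j" "Suc i mod k \<noteq> j"
    show "g i = g (Suc i mod k)"
      using same_arc_along_H_edge[OF il iso link_in_H outside(2)[OF i(1,2)]
          outside(1)[OF Suc_mod_less i(3)] some_occ some_occ]
        arc_q[OF i(1,2) some_occ] arc_p[OF Suc_mod_less i(3) some_occ] i(1) Suc_mod_less by auto
  qed
  moreover have "\<exists>i<k. i \<noteq> j \<and> (w ! t = p i \<or> w ! t = q i)"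
    if "t < length w" "t \<notin> {a, b, c, d}" for t
  proof -
    have "t \<notin> occurrences w u" "t \<notin> occurrences w v"
      using that(2) interlacedD(5,6)[OF il] by auto
    with that(1) uv have "w ! t \<notin> {p j, q j}"
      by auto
    with letters_in_B[OF that(1)] show ?thesis
      by blast
  qed
  ultimately have "arc a b c d t = g (Suc j mod k)" if "t < length w" "t \<notin> {a, b, c, d}" for t
    using that arc_p arc_q by (metis mem_occurrences_iff)
  then show ?thesis
    by metis
qed

lemma isolated_iff_many_transitions:
  assumes "j < k"
  shows "isolated_alternance_edge w (p j) (q j) \<longleftrightarrow> 3 \<le> card (transitions w (p j) (q j))"
proof
  have "p j \<in> B" "q j \<in> B"
    using assms by auto
  note occ = card_occurrences[OF \<open>p j \<in> B\<close>] card_occurrences[OF \<open>q j \<in> B\<close>]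
  show "isolated_alternance_edge w (p j) (q j)" if "3 \<le> card (transitions w (p j) (q j))"
    using isolated_if_many_transitions[OF p_neq_q[OF assms assms] occ that] .
  assume iso: "isolated_alternance_edge w (p j) (q j)"
  then have "alternate w (p j) (q j)"
    unfolding isolated_alternance_edge_def by blast
  then obtain u v a b c d where uv: "{u, v} = {p j, q j}" and il: "interlaced w u v a b c d"
    using occ by (rule interlaced_if_alternate) (metis insert_commute)+
  moreover from uv iso have "isolated_alternance_edge w u v"
    by (metis doubleton_eq_iff isolated_alternance_edge_sym)
  ultimately have "three_gaps_empty (length w) a b c d"
    using three_gaps_empty_iff_arc_const[OF interlacedD(1-4)[OF il]] arc_const_if_isolated[OF assms]
    by blast
  with il have "3 \<le> card (transitions w u v)"
    by (rule card_transitions_ge_3)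
  with uv show "3 \<le> card (transitions w (p j) (q j))"
    by (metis doubleton_eq_iff transitions_commute)
qed

lemma alternance_edges_eq_blocks_iff:
  "alternance_edges w = blocks \<longleftrightarrow> (\<forall>j<k. isolated_alternance_edge w (p j) (q j))"
proof
  assume AE: "alternance_edges w = blocks"
  have "isolated_alternance_edge w (p j) (q j)" if "j < k" for j
    unfolding isolated_alternance_edge_def
  proof (intro conjI allI impI)
    have "{p j, q j} \<in> alternance_edges w"
      using AE that by blast
    then show "alternate w (p j) (q j)"
      by (simp add: doubleton_mem_alternance_edges_iff)
    have not_alt: "\<not> alternate w x y" if "x \<notin> {p j, q j}" "y \<in> {p j, q j}" for x y
    proof
      assume "alternate w x y"
      with that have "{x, y} \<in> blocks"
        unfolding AE[symmetric] doubleton_mem_alternance_edges_iff by auto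
      then obtain i where "i < k" "{x, y} = {p i, q i}"
        by blast
      with that \<open>j < k\<close> show False
        using block_unique[of i j y] by auto
    qed
    fix x assume "x \<notin> {p j, q j}"
    then show "\<not> alternate w x (p j)" "\<not> alternate w x (q j)"
      using not_alt by simp_all
  qed
  then show "\<forall>j<k. isolated_alternance_edge w (p j) (q j)"
    by blast
next
  assume iso: "\<forall>j<k. isolated_alternance_edge w (p j) (q j)"
  show "alternance_edges w = blocks"
  proof
    show "alternance_edges w \<subseteq> blocks"
    proof
      fix e assume "e \<in> alternance_edges w"
      then obtain x y where e: "e = {x, y}" "x \<noteq> y" "alternate w x y"
        unfolding alternance_edges_def by blast
      then have "x \<in> B"
        using alternate_imp_occurs letters_in_B by metis
      then obtain j where "j < k" "x \<in> {p j, q j}"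
        by blast
      moreover have "y \<in> {p j, q j}"
      proof (rule ccontr)
        assume "y \<notin> {p j, q j}"
        with iso \<open>j < k\<close> \<open>x \<in> {p j, q j}\<close> have "\<not> alternate w y x"
          unfolding isolated_alternance_edge_def by auto
        with e(3) show False
          by (simp add: alternate_sym)
      qed
      ultimately show "e \<in> blocks"
        using e(1,2) by (auto simp: doubleton_eq_iff)
    qed
    show "blocks \<subseteq> alternance_edges w"
      using iso p_neq_q unfolding isolated_alternance_edge_def alternance_edges_def by blast
  qed
qed

lemma M_eq_blocks_iff: "M = blocks \<longleftrightarrow> (\<forall>j<k. {p j, q j} \<in> M)"
proof
  have "perfect_matching_on B blocks"
    unfolding perfect_matching_on_def
  proof (intro conjI ballI)
    show "\<exists>x y. e = {x, y} \<and> x \<noteq> y \<and> x \<in> B \<and> y \<in> B" if "e \<in> blocks" for e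
      using that p_neq_q by blast
    show "\<exists>!e. e \<in> blocks \<and> v \<in> e" if "v \<in> B" for v
    proof -
      from that obtain j where "j < k" "v \<in> {p j, q j}"
        by blast
      then show ?thesis
        using block_unique by (intro ex1I[of _ "{p j, q j}"]) auto
    qed
  qed
  moreover assume "\<forall>j<k. {p j, q j} \<in> M"
  ultimately show "M = blocks"
    using matching by (intro perfect_matching_eqI) blast+
qed auto

end

theorem mainTheorem2:
  fixes k :: nat and p q :: "nat \<Rightarrow> 'a" and M :: "'a set set" and w :: "'a list"
  assumes "k \<ge> 1"
    and "inj_on p {..<k}" and "inj_on q {..<k}"
    and "p ` {..<k} \<inter> q ` {..<k} = {}"
    and "perfect_matching_on (p ` {..<k} \<union> q ` {..<k}) M"
    and "eulerian_tour_word (H_edges k p q M) w"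
  shows "alternance_edges w = {{p i, q i} | i. i < k} \<longleftrightarrow> M = {{p i, q i} | i. i < k}"
proof -
  interpret H_tour k p q M w
    using assms by unfold_locales
  have "alternance_edges w = blocks \<longleftrightarrow> (\<forall>j<k. isolated_alternance_edge w (p j) (q j))"
    by (rule alternance_edges_eq_blocks_iff)
  also have "\<dots> \<longleftrightarrow> (\<forall>j<k. 3 \<le> card (transitions w (p j) (q j)))"
    using isolated_iff_many_transitions by blast
  also have "\<dots> \<longleftrightarrow> (\<forall>j<k. {p j, q j} \<in> M)"
    using block_in_M_iff by blast
  also have "\<dots> \<longleftrightarrow> M = blocks"
    by (rule M_eq_blocks_iff[symmetric])
  finally show ?thesis .
qed

end
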